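(* Let $G=(V,q)$ be a reversible connected graph with non-negative Ollivier curvature, and let $\widetilde G=(V\times V,\widetilde q)$ be a perfect coupling graph of $G$ with Laplacian $\widetilde\Delta$. Define $u_t:V\times V\to[0,1]$ by $u_t(x,y):=\phi_t(d(x,y))$. Then $\partial_tu_t\ge\widetilde\Delta u_t$ on $V\times V$ for all $t>0$.
   Context: A graph $G=(V,q)$ consists of a countable set $V$ and a function $q:V\times V\to[0,\infty)$ such that $\#\{y:q(x,y)>0\}<\infty$ for every $x\in V$; its Laplacian is $\Delta f(x)=\sum_y q(x,y)(f(y)-f(x))$. $G$ is reversible if there is $m:V\to(0,\infty)$ with $q(x,y)m(x)=q(y,x)m(y)$. For reversible $G$, $x\sim y$ means $q(x,y)>0$ and $d$ is the combinatorial graph distance (finite since $G$ is connected). $q_{\min}:=\inf\{q(x,y):q(x,y)>0\}$. Ollivier curvature: for $x\ne y$ and $f:V\to\mathbb R$ let $\nabla_{xy}f=(f(x)-f(y))/d(x,y)$, $\|\nabla f\|_\infty=\sup_{x\ne y}|\nabla_{xy}f|$, and $\kappa(x,y)=\inf\{\nabla_{xy}\Delta f:\ \|\nabla f\|_\infty=1,\ \nabla_{yx}f=1\}$. Non-negative Ollivier curvature means $\kappa(x,y)\ge0$ for all $x\ne y$. $(f\otimes g)(x,y)=f(x)g(y)$. A graph $\widetilde G=(V\times V,\widetilde q)$ with Laplacian $\widetilde\Delta$ is a coupling graph of $G$ if $\widetilde\Delta(f\otimes 1)=\Delta f\otimes 1$ and $\widetilde\Delta(1\otimes f)=1\otimes\Delta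 f$ for all $f$. A transport plan from $x_0$ to $y_0$ is $\rho:V\times V\to[0,\infty)$ with $\sum_{y}\rho(x,y)=q(x_0,x)$ for $x\neq x_0$ and $\sum_x\rho(x,y)=q(y_0,y)$ for $y\ne y_0$; $\mathrm{cost}(\rho)=\sum_{x,y}\rho(x,y)(d(x_0,y_0)-d(x,y))$; $\mu_\rho(k)=\sum_{d(x,y)-d(x_0,y_0)=k}\rho(x,y)$; $\rho$ is optimal if it maximizes cost. A coupling graph is perfect if for all $x_0,y_0$ the plan $\rho_{x_0y_0}:=\widetilde q((x_0,y_0),(\cdot,\cdot))$ is optimal, has $\mu_{\rho_{x_0y_0}}(k)=0$ for $|k|>1$, and has $\mu_{\rho_{x_0y_0}}(-1)\ge 2q_{\min}$ when $x_0\ne y_0$. $\phi_t(n):=P^{\mathbb N_0}_t1_{\mathbb N_+}(n)$, where $P^{\mathbb N_0}_t$ is the heat semigroup (minimal, defined by finite-set exhaustion) of the graph on $\mathbb N_0$ with rates $q_0(x,y)=2q_{\min}$ if $|x-y|=1$ and $x>0$, and $0$ otherwise. *)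

theory Defs
  imports "HOL-Analysis.Analysis"
begin

(* A graph on the vertex type 'a (V = UNIV) with weights q *)
definition is_graph :: "('a \<Rightarrow> 'a \<Rightarrow> real) \<Rightarrow> bool" where
  "is_graph q \<longleftrightarrow> countable (UNIV :: 'a set) \<and> (\<forall>x y. q x y \<ge> 0) \<and> (\<forall>x. finite {y. q x y > 0})"

definition laplacian :: "('a \<Rightarrow> 'a \<Rightarrow> real) \<Rightarrow> ('a \<Rightarrow> real) \<Rightarrow> 'a \<Rightarrow> real" where
  "laplacian q f x = (\<Sum>y\<in>{y. q x y > 0}. q x y * (f y - f x))"

definition reversible :: "('a \<Rightarrow> 'a \<Rightarrow> real) \<Rightarrow> bool" where
  "reversible q \<longleftrightarrow> (\<exists>m :: 'a \<Rightarrow> real. (\<forall>x. m x > 0) \<and> (\<forall>x y. q x y * m x = q y x * m y))"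

definition edges :: "('a \<Rightarrow> 'a \<Rightarrow> real) \<Rightarrow> ('a \<times> 'a) set" where
  "edges q = {(x, y). q x y > 0}"

definition connected_graph :: "('a \<Rightarrow> 'a \<Rightarrow> real) \<Rightarrow> bool" where
  "connected_graph q \<longleftrightarrow> (\<forall>x y. (x, y) \<in> (edges q)\<^sup>*)"

definition gdist :: "('a \<Rightarrow> 'a \<Rightarrow> real) \<Rightarrow> 'a \<Rightarrow> 'a \<Rightarrow> nat" where
  "gdist q x y = (LEAST n. (x, y) \<in> (edges q) ^^ n)"

definition qmin :: "('a \<Rightarrow> 'a \<Rightarrow> real) \<Rightarrow> real" where
  "qmin q = Inf {q x y | x y. q x y > 0}"

definition grad :: "('a \<Rightarrow> 'a \<Rightarrow> real) \<Rightarrow> 'a \<Rightarrow> 'a \<Rightarrow> ('a \<Rightarrow> real) \<Rightarrow> real" where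
  "grad q x y f = (f x - f y) / real (gdist q x y)"

(* \<parallel>\<nabla>f\<parallel>_\<infinity> = 1 together with \<nabla>_{yx} f = 1 is expressed as:
   |\<nabla>_{ab} f| \<le> 1 for all a \<noteq> b, and \<nabla>_{yx} f = 1 (so the sup equals 1 and is attained) *)
definition ollivier_curvature :: "('a \<Rightarrow> 'a \<Rightarrow> real) \<Rightarrow> 'a \<Rightarrow> 'a \<Rightarrow> real" where
  "ollivier_curvature q x y =
     Inf {grad q x y (laplacian q f) | f.
            (\<forall>a b. a \<noteq> b \<longrightarrow> \<bar>grad q a b f\<bar> \<le> 1) \<and> grad q y x f = 1}"

definition nonneg_ollivier :: "('a \<Rightarrow> 'a \<Rightarrow> real) \<Rightarrow> bool" where
  "nonneg_ollivier q \<longleftrightarrow> (\<forall>x y. x \<noteq> y \<longrightarrow> ollivier_curvature q x y \<ge> 0)"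

definition coupling_graph ::
  "('a \<Rightarrow> 'a \<Rightarrow> real) \<Rightarrow> ('a \<times> 'a \<Rightarrow> 'a \<times> 'a \<Rightarrow> real) \<Rightarrow> bool" where
  "coupling_graph q qt \<longleftrightarrow> is_graph qt \<and>
     (\<forall>f. laplacian qt (\<lambda>(x, y). f x) = (\<lambda>(x, y). laplacian q f x)) \<and>
     (\<forall>f. laplacian qt (\<lambda>(x, y). f y) = (\<lambda>(x, y). laplacian q f y))"

definition transport_plan ::
  "('a \<Rightarrow> 'a \<Rightarrow> real) \<Rightarrow> 'a \<Rightarrow> 'a \<Rightarrow> ('a \<times> 'a \<Rightarrow> real) \<Rightarrow> bool" where
  "transport_plan q x0 y0 \<rho> \<longleftrightarrow> (\<forall>p. \<rho> p \<ge> 0) \<and>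
     (\<forall>x. x \<noteq> x0 \<longrightarrow> ((\<lambda>y. \<rho> (x, y)) has_sum q x0 x) UNIV) \<and>
     (\<forall>y. y \<noteq> y0 \<longrightarrow> ((\<lambda>x. \<rho> (x, y)) has_sum q y0 y) UNIV)"

definition plan_cost ::
  "('a \<Rightarrow> 'a \<Rightarrow> real) \<Rightarrow> 'a \<Rightarrow> 'a \<Rightarrow> ('a \<times> 'a \<Rightarrow> real) \<Rightarrow> real" where
  "plan_cost q x0 y0 \<rho> =
     (\<Sum>\<^sub>\<infinity>(x, y)\<in>UNIV. \<rho> (x, y) * (real (gdist q x0 y0) - real (gdist q x y)))"

definition plan_mu ::
  "('a \<Rightarrow> 'a \<Rightarrow> real) \<Rightarrow> 'a \<Rightarrow> 'a \<Rightarrow> ('a \<times> 'a \<Rightarrow> real) \<Rightarrow> int \<Rightarrow> real" where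
  "plan_mu q x0 y0 \<rho> k =
     (\<Sum>\<^sub>\<infinity>(x, y)\<in>{(x, y). int (gdist q x y) - int (gdist q x0 y0) = k}. \<rho> (x, y))"

definition optimal_plan ::
  "('a \<Rightarrow> 'a \<Rightarrow> real) \<Rightarrow> 'a \<Rightarrow> 'a \<Rightarrow> ('a \<times> 'a \<Rightarrow> real) \<Rightarrow> bool" where
  "optimal_plan q x0 y0 \<rho> \<longleftrightarrow> transport_plan q x0 y0 \<rho> \<and>
     (\<forall>\<sigma>. transport_plan q x0 y0 \<sigma> \<longrightarrow> plan_cost q x0 y0 \<sigma> \<le> plan_cost q x0 y0 \<rho>)"

definition perfect_coupling ::
  "('a \<Rightarrow> 'a \<Rightarrow> real) \<Rightarrow> ('a \<times> 'a \<Rightarrow> 'a \<times> 'a \<Rightarrow> real) \<Rightarrow> bool" where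
  "perfect_coupling q qt \<longleftrightarrow> coupling_graph q qt \<and>
     (\<forall>x0 y0. optimal_plan q x0 y0 (qt (x0, y0)) \<and>
        (\<forall>k. \<bar>k\<bar> > 1 \<longrightarrow> plan_mu q x0 y0 (qt (x0, y0)) k = 0) \<and>
        (x0 \<noteq> y0 \<longrightarrow> plan_mu q x0 y0 (qt (x0, y0)) (-1) \<ge> 2 * qmin q))"

definition dirichlet_laplacian ::
  "('a \<Rightarrow> 'a \<Rightarrow> real) \<Rightarrow> 'a set \<Rightarrow> ('a \<Rightarrow> real) \<Rightarrow> 'a \<Rightarrow> real" where
  "dirichlet_laplacian q W f x =
     (if x \<in> W then laplacian q (\<lambda>z. if z \<in> W then f z else 0) x else 0)"

definition dirichlet_heat ::
  "('a \<Rightarrow> 'a \<Rightarrow> real) \<Rightarrow> 'a set \<Rightarrow> real \<Rightarrow> ('a \<Rightarrow> real) \<Rightarrow> 'a \<Rightarrow> real" where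
  "dirichlet_heat q W t f x =
     (\<Sum>k. t ^ k / fact k * ((dirichlet_laplacian q W ^^ k) (\<lambda>z. if z \<in> W then f z else 0)) x)"

(* minimal heat semigroup on \<nat>_0, via the exhaustion {0..N} *)
definition heat_nat :: "(nat \<Rightarrow> nat \<Rightarrow> real) \<Rightarrow> real \<Rightarrow> (nat \<Rightarrow> real) \<Rightarrow> nat \<Rightarrow> real" where
  "heat_nat q t f n = lim (\<lambda>N. dirichlet_heat q {..N} t f n)"

definition q_N0 :: "real \<Rightarrow> nat \<Rightarrow> nat \<Rightarrow> real" where
  "q_N0 c x y = (if (x = y + 1 \<or> y = x + 1) \<and> x > 0 then 2 * c else 0)"

definition phi :: "real \<Rightarrow> real \<Rightarrow> nat \<Rightarrow> real" where
  "phi c t n = heat_nat (q_N0 c) t (indicator {0<..}) n"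

end

theory Submission
  imports Defs
begin

text \<open>
  By Tannery's theorem the minimal heat semigroup of the birth-death chain on \<open>\<nat>\<^sub>0\<close> is the
  exponential series of its bounded generator \<open>\<Delta>\<^sub>0\<close>, so \<open>\<partial>\<^sub>t\<phi>\<^sub>t = \<Delta>\<^sub>0\<phi>\<^sub>t\<close>; and \<open>\<phi>\<^sub>t\<close> is nondecreasing and
  concave because its first and second differences evolve under positivity preserving semigroups.

  In a perfect coupling the plan leaving \<open>(x, y)\<close> changes the distance \<open>n = d(x, y)\<close> by at most one,
  so the coupling Laplacian of \<open>u\<^sub>t\<close> at \<open>(x, y)\<close> is
  \<open>\<mu>(-1) (\<phi>\<^sub>t(n-1) - \<phi>\<^sub>t(n)) + \<mu>(1) (\<phi>\<^sub>t(n+1) - \<phi>\<^sub>t(n))\<close>, where \<open>\<mu>(k)\<close> is the mass sent to distance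
  \<open>n + k\<close>. The plan is optimal, hence cyclically monotone, hence admits a 1-Lipschitz Kantorovich
  potential that is tight on its support; testing \<open>\<kappa>(x, y) \<ge> 0\<close> with this potential shows that the
  cost \<open>\<mu>(-1) - \<mu>(1)\<close> is nonnegative. Together with \<open>\<mu>(-1) \<ge> 2 q\<^sub>m\<^sub>i\<^sub>n\<close>, monotonicity and concavity of
  \<open>\<phi>\<^sub>t\<close> bound the coupling Laplacian by \<open>\<Delta>\<^sub>0\<phi>\<^sub>t(n) = \<partial>\<^sub>tu\<^sub>t(x, y)\<close>.
\<close>

section \<open>Exponential series of tridiagonal operators on \<open>\<nat>\<close>\<close>

definition tridiag ::
  "(nat \<Rightarrow> real) \<Rightarrow> (nat \<Rightarrow> real) \<Rightarrow> (nat \<Rightarrow> real) \<Rightarrow> (nat \<Rightarrow> real) \<Rightarrow> nat \<Rightarrow> real" where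
  "tridiag a b e h n = a n * h (Suc n) + b n * (if n = 0 then 0 else h (n - 1)) + e n * h n"

lemma tridiag_abs_le:
  assumes "\<And>n. \<bar>a n\<bar> \<le> K" "\<And>n. \<bar>b n\<bar> \<le> K" "\<And>n. \<bar>e n\<bar> \<le> K" "\<And>n. \<bar>h n\<bar> \<le> H"
  shows "\<bar>tridiag a b e h n\<bar> \<le> 3 * K * H"
proof -
  have "0 \<le> H" "0 \<le> K" using assms(1,4)[of 0] by linarith+
  then have "\<bar>a n * h (Suc n)\<bar> \<le> K * H" "\<bar>b n * (if n = 0 then 0 else h (n - 1))\<bar> \<le> K * H"
      "\<bar>e n * h n\<bar> \<le> K * H"
    unfolding abs_mult by (intro mult_mono; use assms in auto)+
  then show ?thesis unfolding tridiag_def by linarith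
qed

lemma tridiag_funpow_abs_le:
  assumes "\<And>n. \<bar>a n\<bar> \<le> K" "\<And>n. \<bar>b n\<bar> \<le> K" "\<And>n. \<bar>e n\<bar> \<le> K" "\<And>n. \<bar>h n\<bar> \<le> H"
  shows "\<bar>(tridiag a b e ^^ k) h n\<bar> \<le> (3 * K) ^ k * H"
proof (induction k arbitrary: n)
  case (Suc k)
  have "\<bar>tridiag a b e ((tridiag a b e ^^ k) h) n\<bar> \<le> 3 * K * ((3 * K) ^ k * H)"
    by (rule tridiag_abs_le) (use assms Suc in auto)
  then show ?case by (simp add: algebra_simps)
qed (use assms in simp)

lemma tridiag_funpow_nonneg:
  assumes "\<And>n. a n \<ge> 0" "\<And>n. b n \<ge> 0" "\<And>n. e n \<ge> 0" "\<And>n. h n \<ge> 0"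
  shows "(tridiag a b e ^^ k) h n \<ge> 0"
  by (induction k arbitrary: n) (use assms in \<open>simp_all add: tridiag_def\<close>)

lemma tridiag_sum:
  "finite J \<Longrightarrow> tridiag a b e (\<lambda>m. \<Sum>j\<in>J. g j m) n = (\<Sum>j\<in>J. tridiag a b e (g j) n)"
  unfolding tridiag_def by (simp add: sum_distrib_left sum.distrib)

lemma tridiag_scale: "tridiag a b e (\<lambda>m. c * g m) n = c * tridiag a b e g n"
  unfolding tridiag_def by (simp add: algebra_simps)

lemma tridiag_funpow_add_diag:
  "(tridiag a b (\<lambda>n. e n + l) ^^ k) h n
     = (\<Sum>j\<le>k. of_nat (k choose j) * l ^ (k - j) * (tridiag a b e ^^ j) h n)"
proof (induction k arbitrary: n)
  case (Suc k)
  let ?P = "\<lambda>j. (tridiag a b e ^^ j) h n"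
  have IH: "(tridiag a b (\<lambda>n. e n + l) ^^ k) h
      = (\<lambda>m. \<Sum>j\<le>k. of_nat (k choose j) * l ^ (k - j) * (tridiag a b e ^^ j) h m)"
    using Suc by auto
  have "(tridiag a b (\<lambda>n. e n + l) ^^ Suc k) h n
      = tridiag a b e ((tridiag a b (\<lambda>n. e n + l) ^^ k) h) n
        + l * (tridiag a b (\<lambda>n. e n + l) ^^ k) h n"
    by (simp add: tridiag_def algebra_simps)
  also have "\<dots> = (\<Sum>j\<le>k. of_nat (k choose j) * l ^ (k - j) * ?P (Suc j))
      + (\<Sum>j\<le>k. of_nat (k choose j) * l ^ (Suc k - j) * ?P j)"
    unfolding IH by (simp add: tridiag_sum tridiag_scale sum_distrib_left algebra_simps Suc_diff_le)
  also have "(\<Sum>j\<le>k. of_nat (k choose j) * l ^ (k - j) * ?P (Suc j))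
      = (\<Sum>j\<le>Suc k. (if j = 0 then 0 else of_nat (k choose (j - 1)) * l ^ (Suc k - j)) * ?P j)"
    by (subst sum.atMost_Suc_shift) (simp add: binomial_eq_0)
  also have "(\<Sum>j\<le>k. of_nat (k choose j) * l ^ (Suc k - j) * ?P j)
      = (\<Sum>j\<le>Suc k. of_nat (k choose j) * l ^ (Suc k - j) * ?P j)"
    by (simp add: binomial_eq_0)
  also have "(\<Sum>j\<le>Suc k. (if j = 0 then 0 else of_nat (k choose (j - 1)) * l ^ (Suc k - j)) * ?P j)
      + (\<Sum>j\<le>Suc k. of_nat (k choose j) * l ^ (Suc k - j) * ?P j)
      = (\<Sum>j\<le>Suc k. of_nat (Suc k choose j) * l ^ (Suc k - j) * ?P j)"
    unfolding sum.distrib[symmetric]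
  proof (rule sum.cong[OF refl])
    fix j show "(if j = 0 then 0 else of_nat (k choose (j - 1)) * l ^ (Suc k - j)) * ?P j
        + of_nat (k choose j) * l ^ (Suc k - j) * ?P j = of_nat (Suc k choose j) * l ^ (Suc k - j) * ?P j"
      by (cases j) (simp_all add: algebra_simps)
  qed
  finally show ?case .
qed simp

definition exp_series :: "((nat \<Rightarrow> real) \<Rightarrow> nat \<Rightarrow> real) \<Rightarrow> real \<Rightarrow> (nat \<Rightarrow> real) \<Rightarrow> nat \<Rightarrow> real" where
  "exp_series A t h n = (\<Sum>k. t ^ k / fact k * (A ^^ k) h n)"

locale bounded_tridiag =
  fixes a b e :: "nat \<Rightarrow> real" and K :: real
  assumes a_bound: "\<And>n. \<bar>a n\<bar> \<le> K" and b_bound: "\<And>n. \<bar>b n\<bar> \<le> K" and e_bound: "\<And>n. \<bar>e n\<bar> \<le> K"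
begin

lemma summable_exp_series_abs:
  assumes "\<And>m. \<bar>h m\<bar> \<le> H"
  shows "summable (\<lambda>k. \<bar>t ^ k / fact k * (tridiag a b e ^^ k) h n\<bar>)"
proof (rule summable_comparison_test)
  have "norm \<bar>t ^ k / fact k * (tridiag a b e ^^ k) h n\<bar> \<le> H * (inverse (fact k) * (3 * K * \<bar>t\<bar>) ^ k)"
    for k
  proof -
    have "\<bar>t ^ k / fact k * (tridiag a b e ^^ k) h n\<bar> = \<bar>t\<bar> ^ k / fact k * \<bar>(tridiag a b e ^^ k) h n\<bar>"
      by (simp add: abs_mult power_abs)
    also have "\<dots> \<le> \<bar>t\<bar> ^ k / fact k * ((3 * K) ^ k * H)"
      by (intro mult_left_mono tridiag_funpow_abs_le a_bound b_bound e_bound assms) simp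
    also have "\<dots> = H * (inverse (fact k) * (3 * K * \<bar>t\<bar>) ^ k)"
      by (simp add: power_mult_distrib field_simps)
    finally show ?thesis by simp
  qed
  then show "\<exists>N. \<forall>k\<ge>N. norm \<bar>t ^ k / fact k * (tridiag a b e ^^ k) h n\<bar>
      \<le> H * (inverse (fact k) * (3 * K * \<bar>t\<bar>) ^ k)"
    by blast
  show "summable (\<lambda>k. H * (inverse (fact k) * (3 * K * \<bar>t\<bar>) ^ k))"
    by (intro summable_mult summable_exp)
qed

lemma summable_exp_series:
  "(\<And>m. \<bar>h m\<bar> \<le> H) \<Longrightarrow> summable (\<lambda>k. t ^ k / fact k * (tridiag a b e ^^ k) h n)"
  by (rule summable_rabs_cancel[OF summable_exp_series_abs])

lemma exp_series_add_diag:
  assumes "\<And>m. \<bar>h m\<bar> \<le> H"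
  shows "exp_series (tridiag a b (\<lambda>n. e n + l)) t h n = exp (l * t) * exp_series (tridiag a b e) t h n"
proof -
  let ?A = "tridiag a b e"
  define \<alpha> where "\<alpha> k = t ^ k / fact k * (?A ^^ k) h n" for k
  define \<beta> where "\<beta> k = (l * t) ^ k / fact k" for k
  have \<alpha>: "summable (\<lambda>k. norm (\<alpha> k))"
    using summable_exp_series_abs[OF assms] by (simp add: \<alpha>_def)
  have \<beta>: "summable (\<lambda>k. norm (\<beta> k))"
    using summable_exp[of "\<bar>l * t\<bar>"] by (simp add: \<beta>_def abs_mult power_abs field_simps)
  have exp_eq: "exp (l * t) = (\<Sum>k. \<beta> k)"
    using exp_converges[of "l * t"] unfolding \<beta>_def by (simp add: sums_iff field_simps)
  have "exp_series ?A t h n * exp (l * t) = (\<Sum>k. \<Sum>i\<le>k. \<alpha> i * \<beta> (k - i))"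
    unfolding exp_eq exp_series_def \<alpha>_def[symmetric] by (rule Cauchy_product[OF \<alpha> \<beta>])
  also have "\<dots> = (\<Sum>k. t ^ k / fact k * (tridiag a b (\<lambda>n. e n + l) ^^ k) h n)"
  proof (rule suminf_cong)
    fix k
    have "\<alpha> i * \<beta> (k - i) = t ^ k / fact k * (of_nat (k choose i) * l ^ (k - i) * (?A ^^ i) h n)"
      if "i \<le> k" for i
    proof -
      have "t ^ k = t ^ i * t ^ (k - i)" using that by (simp add: power_add[symmetric])
      moreover have "real (k choose i) = fact k / (fact i * fact (k - i))"
        using binomial_fact[OF that] by simp
      ultimately show ?thesis by (simp add: \<alpha>_def \<beta>_def power_mult_distrib field_simps)
    qed
    then show "(\<Sum>i\<le>k. \<alpha> i * \<beta> (k - i)) = t ^ k / fact k * (tridiag a b (\<lambda>n. e n + l) ^^ k) h n"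
      by (simp add: tridiag_funpow_add_diag sum_distrib_left)
  qed
  finally show ?thesis unfolding exp_series_def by (simp add: mult.commute)
qed

text \<open>Shifting the diagonal by \<open>K\<close> makes all coefficients nonnegative, and the shift only
  contributes the positive factor \<open>exp (K * t)\<close>.\<close>
lemma exp_series_nonneg:
  assumes "\<And>m. \<bar>h m\<bar> \<le> H" "\<And>n. h n \<ge> 0" "\<And>n. a n \<ge> 0" "\<And>n. b n \<ge> 0" "t \<ge> 0"
  shows "exp_series (tridiag a b e) t h n \<ge> 0"
proof -
  interpret shifted: bounded_tridiag a b "\<lambda>n. e n + K" "2 * K"
  proof unfold_locales
    have "0 \<le> K" using a_bound[of 0] by linarith
    then show "\<bar>a n\<bar> \<le> 2 * K" "\<bar>b n\<bar> \<le> 2 * K" "\<bar>e n + K\<bar> \<le> 2 * K" for n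
      using a_bound[of n] b_bound[of n] e_bound[of n] by linarith+
  qed
  have "exp_series (tridiag a b (\<lambda>n. e n + K)) t h n \<ge> 0"
    unfolding exp_series_def
  proof (rule suminf_nonneg)
    show "summable (\<lambda>k. t ^ k / fact k * (tridiag a b (\<lambda>n. e n + K) ^^ k) h n)"
      by (rule shifted.summable_exp_series[OF assms(1)])
    have "e m + K \<ge> 0" for m using e_bound[of m] by linarith
    then have "(tridiag a b (\<lambda>n. e n + K) ^^ k) h n \<ge> 0" for k
      by (intro tridiag_funpow_nonneg assms)
    then show "0 \<le> t ^ k / fact k * (tridiag a b (\<lambda>n. e n + K) ^^ k) h n" for k
      using assms(5) by simp
  qed
  then show ?thesis using exp_series_add_diag[OF assms(1)] by (simp add: zero_le_mult_iff)
qed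

lemma tridiag_exp_series:
  assumes "\<And>m. \<bar>h m\<bar> \<le> H"
  shows "tridiag a b e (exp_series (tridiag a b e) t h) n
    = (\<Sum>k. t ^ k / fact k * (tridiag a b e ^^ Suc k) h n)"
proof -
  let ?T = "\<lambda>m k. t ^ k / fact k * (tridiag a b e ^^ k) h m"
  have s: "summable (?T m)" for m using summable_exp_series[OF assms] .
  have "tridiag a b e (exp_series (tridiag a b e) t h) n
      = a n * suminf (?T (Suc n)) + b n * (if n = 0 then 0 else suminf (?T (n - 1))) + e n * suminf (?T n)"
    by (simp add: tridiag_def exp_series_def)
  also have "\<dots> = (\<Sum>k. a n * ?T (Suc n) k) + (\<Sum>k. b n * (if n = 0 then 0 else ?T (n - 1) k))
      + (\<Sum>k. e n * ?T n k)"
    using suminf_mult[OF s[of "Suc n"], of "a n"] suminf_mult[OF s[of "n - 1"], of "b n"]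
      suminf_mult[OF s[of n], of "e n"] by simp
  also have "\<dots> = (\<Sum>k. a n * ?T (Suc n) k + b n * (if n = 0 then 0 else ?T (n - 1) k) + e n * ?T n k)"
  proof -
    have sa: "summable (\<lambda>k. a n * ?T (Suc n) k)" and se: "summable (\<lambda>k. e n * ?T n k)"
      by (intro summable_mult s)+
    have sb: "summable (\<lambda>k. b n * (if n = 0 then 0 else ?T (n - 1) k))"
      using summable_mult[OF s[of "n - 1"], of "b n"] by (cases "n = 0") simp_all
    show ?thesis unfolding suminf_add[OF sa sb] suminf_add[OF summable_add[OF sa sb] se] ..
  qed
  also have "\<dots> = (\<Sum>k. t ^ k / fact k * (tridiag a b e ^^ Suc k) h n)"
    by (rule suminf_cong) (simp add: tridiag_def algebra_simps)
  finally show ?thesis .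
qed

lemma exp_series_has_real_derivative:
  assumes "\<And>m. \<bar>h m\<bar> \<le> H"
  shows "((\<lambda>s. exp_series (tridiag a b e) s h n) has_real_derivative
           tridiag a b e (exp_series (tridiag a b e) t h) n) (at t)"
proof -
  define c where "c k = (tridiag a b e ^^ k) h n / fact k" for k
  have eq: "(\<lambda>s. exp_series (tridiag a b e) s h n) = (\<lambda>s. \<Sum>k. c k * s ^ k)"
    unfolding exp_series_def c_def by (rule ext, rule suminf_cong) (simp add: field_simps)
  have "((\<lambda>s. \<Sum>k. c k * s ^ k) has_real_derivative (\<Sum>k. diffs c k * t ^ k)) (at t)"
    by (rule termdiffs_strong_converges_everywhere)
       (use summable_exp_series[OF assms] in \<open>simp add: c_def field_simps\<close>)
  moreover have "diffs c k * t ^ k = t ^ k / fact k * (tridiag a b e ^^ Suc k) h n" for k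
    by (simp add: diffs_def c_def fact_Suc field_simps del: funpow.simps of_nat_Suc)
  ultimately show ?thesis unfolding eq tridiag_exp_series[OF assms] by simp
qed

end

section \<open>The profile \<open>\<phi>\<close>\<close>

definition absorbing_lap :: "real \<Rightarrow> (nat \<Rightarrow> real) \<Rightarrow> nat \<Rightarrow> real" where
  "absorbing_lap r = tridiag (\<lambda>n. if n > 0 then r else 0) (\<lambda>n. if n > 0 then r else 0)
     (\<lambda>n. if n > 0 then - 2 * r else 0)"

definition reflecting_lap :: "real \<Rightarrow> (nat \<Rightarrow> real) \<Rightarrow> nat \<Rightarrow> real" where
  "reflecting_lap r = tridiag (\<lambda>n. r) (\<lambda>n. r) (\<lambda>n. if n = 0 then - r else - 2 * r)"

definition killing_lap :: "real \<Rightarrow> (nat \<Rightarrow> real) \<Rightarrow> nat \<Rightarrow> real" where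
  "killing_lap r = tridiag (\<lambda>n. r) (\<lambda>n. r) (\<lambda>n. - 2 * r)"

definition fwd_diff :: "(nat \<Rightarrow> real) \<Rightarrow> nat \<Rightarrow> real" where
  "fwd_diff g n = g (Suc n) - g n"

definition neg_second_diff :: "(nat \<Rightarrow> real) \<Rightarrow> nat \<Rightarrow> real" where
  "neg_second_diff g n = 2 * g (Suc n) - g n - g (Suc (Suc n))"

lemma absorbing_lap_eq:
  "absorbing_lap r g n = (if n > 0 then r * (g (Suc n) + g (n - 1) - 2 * g n) else 0)"
  by (simp add: absorbing_lap_def tridiag_def algebra_simps)

text \<open>Differences intertwine the absorbing Laplacian with the reflecting and the killed one,
  whose semigroups preserve positivity. This is what makes \<open>\<phi>\<^sub>t\<close> nondecreasing and concave.\<close>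

lemma fwd_diff_absorbing_lap: "fwd_diff (absorbing_lap r g) = reflecting_lap r (fwd_diff g)"
  by (rule ext, case_tac x)
     (simp_all add: absorbing_lap_def reflecting_lap_def fwd_diff_def tridiag_def algebra_simps)

lemma neg_second_diff_absorbing_lap:
  "neg_second_diff (absorbing_lap r g) = killing_lap r (neg_second_diff g)"
  by (rule ext, case_tac x)
     (simp_all add: absorbing_lap_def killing_lap_def neg_second_diff_def tridiag_def algebra_simps)

lemma fwd_diff_absorbing_lap_funpow:
  "fwd_diff ((absorbing_lap r ^^ k) g) = (reflecting_lap r ^^ k) (fwd_diff g)"
  by (induction k) (simp_all add: fwd_diff_absorbing_lap)

lemma neg_second_diff_absorbing_lap_funpow:
  "neg_second_diff ((absorbing_lap r ^^ k) g) = (killing_lap r ^^ k) (neg_second_diff g)"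
  by (induction k) (simp_all add: neg_second_diff_absorbing_lap)

context
  fixes r :: real
  assumes r_nonneg: "r \<ge> 0"
begin

lemma bounded_tridiag_absorbing:
  "bounded_tridiag (\<lambda>n. if n > 0 then r else 0) (\<lambda>n. if n > 0 then r else 0)
     (\<lambda>n. if n > 0 then - 2 * r else 0) (2 * r)"
  by unfold_locales (use r_nonneg in auto)

lemma bounded_tridiag_reflecting:
  "bounded_tridiag (\<lambda>n. r) (\<lambda>n. r) (\<lambda>n. if n = 0 then - r else - 2 * r) (2 * r)"
  by unfold_locales (use r_nonneg in auto)

lemma bounded_tridiag_killing: "bounded_tridiag (\<lambda>n. r) (\<lambda>n. r) (\<lambda>n. - 2 * r) (2 * r)"
  by unfold_locales (use r_nonneg in auto)

lemma summable_exp_series_absorbing: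
  "(\<And>m. \<bar>h m\<bar> \<le> H) \<Longrightarrow> summable (\<lambda>k. t ^ k / fact k * (absorbing_lap r ^^ k) h n)"
  unfolding absorbing_lap_def by (rule bounded_tridiag.summable_exp_series[OF bounded_tridiag_absorbing])

lemma fwd_diff_exp_series_absorbing:
  assumes "\<And>m. \<bar>h m\<bar> \<le> H"
  shows "fwd_diff (exp_series (absorbing_lap r) t h) n = exp_series (reflecting_lap r) t (fwd_diff h) n"
proof -
  have "fwd_diff (exp_series (absorbing_lap r) t h) n
      = (\<Sum>k. t ^ k / fact k * (absorbing_lap r ^^ k) h (Suc n) - t ^ k / fact k * (absorbing_lap r ^^ k) h n)"
    unfolding fwd_diff_def exp_series_def
    by (intro suminf_diff summable_exp_series_absorbing[OF assms])
  also have "\<dots> = exp_series (reflecting_lap r) t (fwd_diff h) n"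
    unfolding exp_series_def fwd_diff_absorbing_lap_funpow[symmetric]
    by (simp add: fwd_diff_def algebra_simps)
  finally show ?thesis .
qed

lemma neg_second_diff_exp_series_absorbing:
  assumes "\<And>m. \<bar>h m\<bar> \<le> H"
  shows "neg_second_diff (exp_series (absorbing_lap r) t h) n
    = exp_series (killing_lap r) t (neg_second_diff h) n"
proof -
  define F where "F m k = t ^ k / fact k * (absorbing_lap r ^^ k) h m" for m k
  have s: "summable (F m)" for m unfolding F_def by (rule summable_exp_series_absorbing[OF assms])
  have "neg_second_diff (exp_series (absorbing_lap r) t h) n
      = 2 * suminf (F (Suc n)) - suminf (F n) - suminf (F (Suc (Suc n)))"
    unfolding neg_second_diff_def exp_series_def F_def[abs_def] ..
  also have "\<dots> = (\<Sum>k. 2 * F (Suc n) k - F n k - F (Suc (Suc n)) k)"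
    unfolding suminf_mult[OF s, symmetric] suminf_diff[OF summable_mult[OF s] s]
      suminf_diff[OF summable_diff[OF summable_mult[OF s] s] s] ..
  also have "\<dots> = exp_series (killing_lap r) t (neg_second_diff h) n"
    unfolding exp_series_def neg_second_diff_absorbing_lap_funpow[symmetric]
    by (simp add: F_def neg_second_diff_def algebra_simps)
  finally show ?thesis .
qed

lemma exp_series_absorbing_mono:
  assumes "\<And>m. \<bar>h m\<bar> \<le> H" "\<And>m. h m \<le> h (Suc m)" "t \<ge> 0"
  shows "exp_series (absorbing_lap r) t h n \<le> exp_series (absorbing_lap r) t h (Suc n)"
proof -
  have "\<bar>fwd_diff h m\<bar> \<le> 2 * H" "fwd_diff h m \<ge> 0" for m
    using assms(1)[of m] assms(1)[of "Suc m"] assms(2)[of m] by (auto simp: fwd_diff_def)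
  then have "exp_series (reflecting_lap r) t (fwd_diff h) n \<ge> 0"
    unfolding reflecting_lap_def
    by (intro bounded_tridiag.exp_series_nonneg[OF bounded_tridiag_reflecting]) (use r_nonneg assms in auto)
  then show ?thesis
    unfolding fwd_diff_exp_series_absorbing[OF assms(1), symmetric] by (simp add: fwd_diff_def)
qed

lemma exp_series_absorbing_concave:
  assumes "\<And>m. \<bar>h m\<bar> \<le> H" "\<And>m. h m + h (Suc (Suc m)) \<le> 2 * h (Suc m)" "t \<ge> 0"
  shows "exp_series (absorbing_lap r) t h n + exp_series (absorbing_lap r) t h (Suc (Suc n))
    \<le> 2 * exp_series (absorbing_lap r) t h (Suc n)"
proof -
  have "\<bar>neg_second_diff h m\<bar> \<le> 4 * H" "neg_second_diff h m \<ge> 0" for m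
    using assms(1)[of m] assms(1)[of "Suc m"] assms(1)[of "Suc (Suc m)"] assms(2)[of m]
    by (auto simp: neg_second_diff_def)
  then have "exp_series (killing_lap r) t (neg_second_diff h) n \<ge> 0"
    unfolding killing_lap_def
    by (intro bounded_tridiag.exp_series_nonneg[OF bounded_tridiag_killing]) (use r_nonneg assms in auto)
  then show ?thesis
    unfolding neg_second_diff_exp_series_absorbing[OF assms(1), symmetric]
    by (simp add: neg_second_diff_def)
qed

lemma exp_series_absorbing_has_real_derivative:
  "(\<And>m. \<bar>h m\<bar> \<le> H) \<Longrightarrow> ((\<lambda>s. exp_series (absorbing_lap r) s h n) has_real_derivative
     absorbing_lap r (exp_series (absorbing_lap r) t h) n) (at t)"
  unfolding absorbing_lap_def
  by (rule bounded_tridiag.exp_series_has_real_derivative[OF bounded_tridiag_absorbing])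

end

lemma laplacian_q_N0: "laplacian (q_N0 c) g m = absorbing_lap (2 * max c 0) g m"
proof (cases "c > 0 \<and> m > 0")
  case True
  then have "{y. q_N0 c m y > 0} = {m - 1, Suc m}" by (auto simp: q_N0_def)
  then show ?thesis using True by (simp add: laplacian_def q_N0_def absorbing_lap_eq algebra_simps)
next
  case False
  then have "{y. q_N0 c m y > 0} = {}" by (auto simp: q_N0_def)
  then show ?thesis using False by (auto simp: laplacian_def absorbing_lap_eq)
qed

definition cutoff :: "nat \<Rightarrow> (nat \<Rightarrow> real) \<Rightarrow> nat \<Rightarrow> real" where
  "cutoff N g = (\<lambda>z. if z \<le> N then g z else 0)"

lemma dirichlet_laplacian_q_N0:
  "dirichlet_laplacian (q_N0 c) {..N} g m
     = (if m \<le> N then absorbing_lap (2 * max c 0) (cutoff N g) m else 0)"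
  by (simp add: dirichlet_laplacian_def laplacian_q_N0 cutoff_def)

text \<open>Far from the cut, the Dirichlet problem on \<open>{..N}\<close> cannot be told apart from the one on \<open>\<nat>\<^sub>0\<close>:
  the \<open>k\<close>-th power only looks \<open>k\<close> steps ahead.\<close>
lemma dirichlet_laplacian_q_N0_funpow:
  "m + k \<le> N \<Longrightarrow> (dirichlet_laplacian (q_N0 c) {..N} ^^ k) (cutoff N f) m
     = (absorbing_lap (2 * max c 0) ^^ k) f m"
proof (induction k arbitrary: m)
  case (Suc k)
  let ?D = "dirichlet_laplacian (q_N0 c) {..N}" and ?A = "absorbing_lap (2 * max c 0)"
  have eq: "cutoff N ((?D ^^ k) (cutoff N f)) m' = (?A ^^ k) f m'" if "m' \<le> Suc m" for m'
    using Suc.IH[of m'] Suc.prems that by (simp add: cutoff_def)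
  have "(?D ^^ Suc k) (cutoff N f) m = ?D ((?D ^^ k) (cutoff N f)) m" by simp
  also have "\<dots> = ?A (cutoff N ((?D ^^ k) (cutoff N f))) m"
    using Suc.prems by (simp add: dirichlet_laplacian_q_N0)
  also have "\<dots> = ?A ((?A ^^ k) f) m"
    using eq by (simp add: absorbing_lap_eq)
  finally show ?case by simp
qed (simp add: cutoff_def)

lemma dirichlet_laplacian_q_N0_funpow_abs_le:
  "(\<And>m. \<bar>h m\<bar> \<le> H) \<Longrightarrow>
     \<bar>(dirichlet_laplacian (q_N0 c) {..N} ^^ k) h n\<bar> \<le> (6 * (2 * max c 0)) ^ k * H"
proof (induction k arbitrary: n)
  case (Suc k)
  let ?r = "2 * max c 0"
  have "0 \<le> H" using Suc.prems[of 0] by linarith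
  then have "\<bar>cutoff N ((dirichlet_laplacian (q_N0 c) {..N} ^^ k) h) m\<bar> \<le> (6 * ?r) ^ k * H" for m
    using Suc by (simp add: cutoff_def)
  then have "\<bar>absorbing_lap ?r (cutoff N ((dirichlet_laplacian (q_N0 c) {..N} ^^ k) h)) n\<bar>
      \<le> 3 * (2 * ?r) * ((6 * ?r) ^ k * H)"
    unfolding absorbing_lap_def by (intro tridiag_abs_le) auto
  moreover have "(dirichlet_laplacian (q_N0 c) {..N} ^^ Suc k) h n
      = (if n \<le> N then absorbing_lap ?r (cutoff N ((dirichlet_laplacian (q_N0 c) {..N} ^^ k) h)) n else 0)"
    unfolding funpow.simps comp_apply by (rule dirichlet_laplacian_q_N0)
  ultimately show ?case using \<open>0 \<le> H\<close> by (simp add: algebra_simps)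
qed simp

definition step_fun :: "nat \<Rightarrow> real" where
  "step_fun = indicator {0<..}"

lemma step_fun_abs_le: "\<bar>step_fun n\<bar> \<le> 1"
  by (simp add: step_fun_def indicator_def)

text \<open>Tannery's theorem, with the exponential series as dominating series.\<close>
lemma dirichlet_heat_q_N0_tendsto:
  "(\<lambda>N. dirichlet_heat (q_N0 c) {..N} t step_fun n)
     \<longlonglongrightarrow> exp_series (absorbing_lap (2 * max c 0)) t step_fun n"
proof -
  let ?r = "2 * max c 0"
  define X where "X k N = t ^ k / fact k * (dirichlet_laplacian (q_N0 c) {..N} ^^ k) (cutoff N step_fun) n"
    for k N
  define M where "M k = inverse (fact k) * (6 * ?r * \<bar>t\<bar>) ^ k" for k
  have "(\<lambda>N. X k N) \<longlonglongrightarrow> t ^ k / fact k * (absorbing_lap ?r ^^ k) step_fun n" for k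
  proof (rule tendsto_eventually)
    show "\<forall>\<^sub>F N in sequentially. X k N = t ^ k / fact k * (absorbing_lap ?r ^^ k) step_fun n"
      using eventually_ge_at_top[of "n + k"]
      by eventually_elim (simp add: X_def dirichlet_laplacian_q_N0_funpow)
  qed
  moreover have "norm (X k N) \<le> M k" for k N
  proof -
    have "\<bar>cutoff N step_fun m\<bar> \<le> 1" for m by (simp add: cutoff_def step_fun_abs_le)
    then have "\<bar>(dirichlet_laplacian (q_N0 c) {..N} ^^ k) (cutoff N step_fun) n\<bar> \<le> (6 * ?r) ^ k"
      using dirichlet_laplacian_q_N0_funpow_abs_le[of "cutoff N step_fun" 1] by simp
    then have "\<bar>t\<bar> ^ k / fact k * \<bar>(dirichlet_laplacian (q_N0 c) {..N} ^^ k) (cutoff N step_fun) n\<bar>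
        \<le> \<bar>t\<bar> ^ k / fact k * (6 * ?r) ^ k"
      by (rule mult_left_mono) simp
    then show ?thesis by (simp add: X_def M_def abs_mult power_abs power_mult_distrib field_simps)
  qed
  moreover have "summable M" unfolding M_def by (rule summable_exp)
  ultimately have "(\<lambda>N. \<Sum>k. X k N) \<longlonglongrightarrow> (\<Sum>k. t ^ k / fact k * (absorbing_lap ?r ^^ k) step_fun n)"
    using tannerys_theorem[where F = sequentially and a = X and M = M] by (simp add: always_eventually)
  then show ?thesis
    by (simp add: X_def dirichlet_heat_def exp_series_def cutoff_def)
qed

lemma phi_eq_exp_series: "phi c t n = exp_series (absorbing_lap (2 * max c 0)) t step_fun n"
  unfolding phi_def heat_nat_def step_fun_def[symmetric] using dirichlet_heat_q_N0_tendsto by (rule limI)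

lemma phi_mono: "t \<ge> 0 \<Longrightarrow> phi c t n \<le> phi c t (Suc n)"
  unfolding phi_eq_exp_series
  by (rule exp_series_absorbing_mono[OF _ step_fun_abs_le]) (auto simp: step_fun_def indicator_def)

lemma phi_concave: "t \<ge> 0 \<Longrightarrow> phi c t n + phi c t (Suc (Suc n)) \<le> 2 * phi c t (Suc n)"
  unfolding phi_eq_exp_series
  by (rule exp_series_absorbing_concave[OF _ step_fun_abs_le]) (auto simp: step_fun_def indicator_def)

lemma phi_has_real_derivative:
  "((\<lambda>s. phi c s n) has_real_derivative absorbing_lap (2 * max c 0) (phi c t) n) (at t)"
  unfolding phi_eq_exp_series
  by (rule exp_series_absorbing_has_real_derivative[OF _ step_fun_abs_le]) simp

section \<open>Optimal transport plans on graphs\<close>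

lemma has_sum_finite_support_iff:
  fixes g :: "'a \<Rightarrow> real"
  assumes "finite G" "\<And>z. z \<notin> G \<Longrightarrow> g z = 0"
  shows "(g has_sum s) UNIV \<longleftrightarrow> s = sum g G"
proof -
  have "(g has_sum sum g G) UNIV" by (rule has_sum_finite_neutralI[OF assms(1)]) (use assms in auto)
  then show ?thesis using has_sum_unique by blast
qed

lemma has_sum_diff:
  fixes f g :: "'a \<Rightarrow> real"
  assumes "(f has_sum a) A" "(g has_sum b) A"
  shows "((\<lambda>x. f x - g x) has_sum (a - b)) A"
proof -
  have "((\<lambda>x. - g x) has_sum - b) A" using assms(2) has_sum_uminus[where f = g and a = "- b"] by simp
  from has_sum_add[OF assms(1) this] show ?thesis by simp
qed

lemma has_sum_count_list_fst:
  "((\<lambda>b. real (count_list xs (a, b))) has_sum real (count_list (map fst xs) a)) UNIV"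
proof (induction xs)
  case (Cons p xs)
  have "((\<lambda>b. if p = (a, b) then 1 else 0) has_sum (if fst p = a then 1 else 0 :: real)) UNIV"
    by (subst has_sum_finite_support_iff[of "{snd p}"]) (auto simp: prod_eq_iff)
  moreover have "real (count_list (p # xs) (a, b)) = real (count_list xs (a, b)) + (if p = (a, b) then 1 else 0)"
    for b by simp
  moreover have "real (count_list (map fst (p # xs)) a)
      = real (count_list (map fst xs) a) + (if fst p = a then 1 else 0)" by simp
  ultimately show ?case using has_sum_add[OF Cons.IH] by presburger
qed simp

lemma has_sum_count_list_snd:
  "((\<lambda>a. real (count_list xs (a, b))) has_sum real (count_list (map snd xs) b)) UNIV"
proof (induction xs)
  case (Cons p xs)
  have "((\<lambda>a. if p = (a, b) then 1 else 0) has_sum (if snd p = b then 1 else 0 :: real)) UNIV"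
    by (subst has_sum_finite_support_iff[of "{fst p}"]) (auto simp: prod_eq_iff)
  moreover have "real (count_list (p # xs) (a, b)) = real (count_list xs (a, b)) + (if p = (a, b) then 1 else 0)"
    for a by simp
  moreover have "real (count_list (map snd (p # xs)) b)
      = real (count_list (map snd xs) b) + (if snd p = b then 1 else 0)" by simp
  ultimately show ?case using has_sum_add[OF Cons.IH] by presburger
qed simp

lemma has_sum_count_list_mult:
  fixes f :: "'a \<Rightarrow> real"
  shows "((\<lambda>p. real (count_list xs p) * f p) has_sum (\<Sum>p\<leftarrow>xs. f p)) UNIV"
proof (induction xs)
  case (Cons p xs)
  have "((\<lambda>p'. if p = p' then f p' else 0) has_sum f p) UNIV"
    by (subst has_sum_finite_support_iff[of "{p}"]) auto
  moreover have "real (count_list (p # xs) p') * f p'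
      = real (count_list xs p') * f p' + (if p = p' then f p' else 0)" for p'
    by (simp add: algebra_simps)
  moreover have "(\<Sum>p'\<leftarrow>p # xs. f p') = (\<Sum>p'\<leftarrow>xs. f p') + f p" by simp
  ultimately show ?case using has_sum_add[OF Cons.IH] by presburger
qed simp

fun shift_pairs :: "'a \<Rightarrow> ('a \<times> 'a) list \<Rightarrow> 'a \<Rightarrow> ('a \<times> 'a) list" where
  "shift_pairs u [] z = [(z, u)]"
| "shift_pairs u (e # L) z = (fst e, u) # shift_pairs (snd e) L z"

lemma map_fst_shift_pairs: "map fst (shift_pairs u L z) = map fst L @ [z]"
  by (induction L arbitrary: u) auto

lemma map_snd_shift_pairs: "map snd (shift_pairs u L z) = u # map snd L"
  by (induction L arbitrary: u) auto

lemma length_shift_pairs: "length (shift_pairs u L z) = Suc (length L)"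
  by (induction L arbitrary: u) auto

locale connected_reversible_graph =
  fixes q :: "'v \<Rightarrow> 'v \<Rightarrow> real"
  assumes graph: "is_graph q" and reversible: "reversible q" and connected: "connected_graph q"
begin

abbreviation "E \<equiv> edges q"
abbreviation "d \<equiv> gdist q"

definition rdist :: "'v \<Rightarrow> 'v \<Rightarrow> real" where
  "rdist x y = real (d x y)"

lemma q_nonneg: "q x y \<ge> 0"
  using graph by (simp add: is_graph_def)

lemma finite_neighbours: "finite {y. q x y > 0}"
  using graph by (simp add: is_graph_def)

lemma q_pos_sym: "q x y > 0 \<longleftrightarrow> q y x > 0"
proof -
  obtain m where m: "\<And>x. m x > 0" "\<And>x y. q x y * m x = q y x * m y"
    using reversible by (auto simp: reversible_def)
  have "q x y > 0 \<longleftrightarrow> q x y * m x > 0" using m(1)[of x] by (simp add: zero_less_mult_iff)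
  also have "\<dots> \<longleftrightarrow> q y x * m y > 0" using m(2) by simp
  also have "\<dots> \<longleftrightarrow> q y x > 0" using m(1)[of y] by (simp add: zero_less_mult_iff)
  finally show ?thesis .
qed

lemma edges_relpow_sym: "(x, y) \<in> E ^^ n \<Longrightarrow> (y, x) \<in> E ^^ n"
proof (induction n arbitrary: y)
  case (Suc n)
  from Suc.prems obtain z where z: "(x, z) \<in> E ^^ n" "(z, y) \<in> E" by (rule relpow_Suc_E)
  then have "(y, z) \<in> E" using q_pos_sym by (simp add: edges_def)
  from this Suc.IH[OF z(1)] show ?case by (rule relpow_Suc_I2)
qed simp

lemma gdist_relpow: "(x, y) \<in> E ^^ (d x y)"
proof -
  have "\<exists>n. (x, y) \<in> E ^^ n" using connected rtrancl_power by (metis connected_graph_def)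
  then show ?thesis unfolding gdist_def by (rule LeastI_ex)
qed

lemma gdist_le: "(x, y) \<in> E ^^ n \<Longrightarrow> d x y \<le> n"
  unfolding gdist_def by (rule Least_le)

lemma gdist_sym: "d x y = d y x"
  using gdist_le[OF edges_relpow_sym[OF gdist_relpow]] le_antisym by metis

lemma gdist_triangle: "d x z \<le> d x y + d y z"
  by (rule gdist_le) (use gdist_relpow[of x y] gdist_relpow[of y z] in \<open>auto simp: relpow_add\<close>)

lemma gdist_eq_0_iff: "d x y = 0 \<longleftrightarrow> x = y"
  using gdist_relpow[of x y] gdist_le[of x x 0] by auto

lemma gdist_edge: "q x y > 0 \<Longrightarrow> d x y \<le> 1"
  by (rule gdist_le) (simp add: edges_def)

lemma rdist_sym: "rdist x y = rdist y x"
  by (simp add: rdist_def gdist_sym)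

lemma rdist_triangle: "rdist x z \<le> rdist x y + rdist y z"
  unfolding rdist_def using gdist_triangle[of x z y] by linarith

lemma rdist_self [simp]: "rdist x x = 0"
  by (simp add: rdist_def gdist_eq_0_iff)

lemma rdist_pos: "x \<noteq> y \<Longrightarrow> rdist x y > 0"
  using gdist_eq_0_iff[of x y] by (simp add: rdist_def)

lemma abs_diff_le_rdist_of_grad:
  assumes "\<forall>a b. a \<noteq> b \<longrightarrow> \<bar>grad q a b g\<bar> \<le> 1"
  shows "\<bar>g a - g b\<bar> \<le> rdist a b"
proof (cases "a = b")
  case False
  then have "rdist a b > 0" "\<bar>g a - g b\<bar> / rdist a b \<le> 1"
    using assms rdist_pos by (auto simp: grad_def rdist_def abs_divide)
  then show ?thesis by (simp add: pos_divide_le_eq)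
qed simp

lemma laplacian_abs_le:
  assumes "\<forall>a b. a \<noteq> b \<longrightarrow> \<bar>grad q a b g\<bar> \<le> 1"
  shows "\<bar>laplacian q g x\<bar> \<le> (\<Sum>a\<in>{a. q x a > 0}. q x a)"
  unfolding laplacian_def
proof (rule order_trans[OF sum_abs sum_mono])
  fix a assume "a \<in> {a. q x a > 0}"
  then have "\<bar>g a - g x\<bar> \<le> 1"
    using abs_diff_le_rdist_of_grad[OF assms, of a x] gdist_edge[of x a] gdist_sym[of a x]
    by (simp add: rdist_def)
  then show "\<bar>q x a * (g a - g x)\<bar> \<le> q x a"
    using mult_left_mono[OF _ q_nonneg] by (fastforce simp: abs_mult q_nonneg)
qed

lemma laplacian_eq_sum_row_marginals:
  assumes "finite S" "\<And>p. p \<notin> S \<Longrightarrow> \<rho> p = 0"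
    and "\<And>a. a \<noteq> x \<Longrightarrow> ((\<lambda>b. \<rho> (a, b)) has_sum q x a) UNIV"
  shows "laplacian q f x = (\<Sum>p\<in>S. \<rho> p * (f (fst p) - f x))"
proof -
  define A where "A = fst ` S \<union> {a. q x a > 0}"
  define B where "B = snd ` S"
  have fin: "finite A" "finite B" using assms(1) finite_neighbours by (auto simp: A_def B_def)
  have "laplacian q f x = (\<Sum>a\<in>A. q x a * (f a - f x))"
    unfolding laplacian_def using fin q_nonneg
    by (intro sum.mono_neutral_left) (auto simp: A_def less_le)
  also have "\<dots> = (\<Sum>a\<in>A. \<Sum>b\<in>B. \<rho> (a, b) * (f a - f x))"
  proof (rule sum.cong[OF refl])
    fix a
    have "q x a = (\<Sum>b\<in>B. \<rho> (a, b))" if "a \<noteq> x"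
      using assms(3)[OF that] has_sum_finite_support_iff[OF fin(2), of "\<lambda>b. \<rho> (a, b)"] assms(2)
      by (force simp: B_def)
    then show "q x a * (f a - f x) = (\<Sum>b\<in>B. \<rho> (a, b) * (f a - f x))"
      by (cases "a = x") (simp_all add: sum_distrib_right)
  qed
  also have "\<dots> = (\<Sum>p\<in>A \<times> B. \<rho> p * (f (fst p) - f x))"
    by (simp add: sum.cartesian_product case_prod_unfold)
  also have "\<dots> = (\<Sum>p\<in>S. \<rho> p * (f (fst p) - f x))"
    using fin assms(2) by (intro sum.mono_neutral_right) (force simp: A_def B_def)+
  finally show ?thesis .
qed

lemma laplacian_eq_sum_col_marginals:
  assumes "finite S" "\<And>p. p \<notin> S \<Longrightarrow> \<rho> p = 0"
    and "\<And>b. b \<noteq> y \<Longrightarrow> ((\<lambda>a. \<rho> (a, b)) has_sum q y b) UNIV"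
  shows "laplacian q f y = (\<Sum>p\<in>S. \<rho> p * (f (snd p) - f y))"
proof -
  have "laplacian q f y = (\<Sum>p\<in>prod.swap ` S. \<rho> (prod.swap p) * (f (fst p) - f y))"
  proof (rule laplacian_eq_sum_row_marginals)
    show "\<rho> (prod.swap p) = 0" if "p \<notin> prod.swap ` S" for p
      using that assms(2)[of "prod.swap p"] by (metis image_eqI swap_swap)
  qed (use assms in auto)
  also have "\<dots> = (\<Sum>p\<in>S. \<rho> p * (f (snd p) - f y))"
    by (subst sum.reindex) (auto simp: inj_on_def)
  finally show ?thesis .
qed

definition pair_dist :: "'v \<times> 'v \<Rightarrow> real" where
  "pair_dist p = rdist (fst p) (snd p)"

text \<open>For a cycle \<open>e # L\<close> of pairs, \<open>pair_dist e + rotation_gain (snd e) L (fst e)\<close> is the decrease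
  of the total distance when every first coordinate is rematched with the preceding second
  coordinate.\<close>
definition rotation_gain :: "'v \<Rightarrow> ('v \<times> 'v) list \<Rightarrow> 'v \<Rightarrow> real" where
  "rotation_gain u L z = (\<Sum>p\<leftarrow>L. pair_dist p) - (\<Sum>p\<leftarrow>shift_pairs u L z. pair_dist p)"

lemma rotation_gain_Nil: "rotation_gain u [] z = - rdist z u"
  by (simp add: rotation_gain_def pair_dist_def)

lemma rotation_gain_Cons: "rotation_gain u ((a, b) # L) z = rdist a b - rdist a u + rotation_gain b L z"
  by (simp add: rotation_gain_def pair_dist_def)

lemma rotation_gain_snoc: "rotation_gain u (L @ [(a, b)]) b = rotation_gain u L a + rdist a b"
  by (induction L arbitrary: u) (auto simp: rotation_gain_Cons rotation_gain_Nil)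

lemma rotation_gain_lipschitz: "rotation_gain u L z \<le> rotation_gain u L w + rdist w z"
proof (induction L arbitrary: u)
  case Nil
  show ?case using rdist_triangle[of w u z] rdist_sym[of z u] rdist_sym[of w u]
    by (simp add: rotation_gain_Nil)
next
  case (Cons e L)
  then show ?case by (cases e) (simp add: rotation_gain_Cons)
qed

lemma rotation_gain_start: "rotation_gain u L z \<le> rotation_gain w L z + rdist u w"
proof (cases L)
  case Nil
  then show ?thesis using rdist_triangle[of z w u] by (simp add: rotation_gain_Nil)
next
  case (Cons e L')
  then show ?thesis
    using rdist_triangle[of "fst e" w u] rdist_sym[of w u] by (cases e) (simp add: rotation_gain_Cons)
qed

lemma plan_cost_eq_infsum: "plan_cost q x y \<tau> = (\<Sum>\<^sub>\<infinity>p. \<tau> p * (rdist x y - pair_dist p))"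
  unfolding plan_cost_def by (simp add: case_prod_unfold rdist_def pair_dist_def)

end

locale finite_optimal_plan = connected_reversible_graph q for q :: "'v \<Rightarrow> 'v \<Rightarrow> real" +
  fixes x y :: 'v and \<rho> :: "'v \<times> 'v \<Rightarrow> real"
  assumes optimal: "optimal_plan q x y \<rho>" and finite_support: "finite {p. \<rho> p > 0}"
begin

abbreviation "supp \<equiv> {p. \<rho> p > 0}"

lemma transport: "transport_plan q x y \<rho>"
  using optimal by (simp add: optimal_plan_def)

lemma rho_nonneg: "\<rho> p \<ge> 0"
  using transport unfolding transport_plan_def by (cases p) simp

lemma rho_eq_0: "p \<notin> supp \<Longrightarrow> \<rho> p = 0"
  using rho_nonneg[of p] by simp

lemma row_marginal: "a \<noteq> x \<Longrightarrow> ((\<lambda>b. \<rho> (a, b)) has_sum q x a) UNIV"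
  using transport by (simp add: transport_plan_def)

lemma col_marginal: "b \<noteq> y \<Longrightarrow> ((\<lambda>a. \<rho> (a, b)) has_sum q y b) UNIV"
  using transport by (simp add: transport_plan_def)

lemma plan_cost_eq_sum: "plan_cost q x y \<rho> = (\<Sum>p\<in>supp. \<rho> p * (rdist x y - pair_dist p))"
  unfolding plan_cost_eq_infsum
proof (rule infsumI, rule has_sum_finite_neutralI[OF finite_support])
  show "\<rho> p * (rdist x y - pair_dist p) = 0" if "p \<in> UNIV - supp" for p
  proof -
    from that have "\<rho> p = 0" by (intro rho_eq_0) simp
    then show ?thesis by simp
  qed
qed auto

lemma has_sum_plan_cost: "((\<lambda>p. \<rho> p * (rdist x y - pair_dist p)) has_sum plan_cost q x y \<rho>) UNIV"
  unfolding plan_cost_eq_sum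
proof (rule has_sum_finite_neutralI[OF finite_support])
  show "\<rho> p * (rdist x y - pair_dist p) = 0" if "p \<in> UNIV - supp" for p
  proof -
    from that have "\<rho> p = 0" by (intro rho_eq_0) simp
    then show ?thesis by simp
  qed
qed auto

lemma transport_plan_perturb:
  assumes "\<epsilon> \<ge> 0" "\<And>p. \<epsilon> * real (count_list dec p) \<le> \<rho> p"
    and "\<And>a. a \<noteq> x \<Longrightarrow> count_list (map fst inc) a = count_list (map fst dec) a"
    and "\<And>b. b \<noteq> y \<Longrightarrow> count_list (map snd inc) b = count_list (map snd dec) b"
  shows "transport_plan q x y (\<lambda>p. \<rho> p + \<epsilon> * real (count_list inc p) - \<epsilon> * real (count_list dec p))"
  unfolding transport_plan_def
proof (intro conjI allI impI)
  show "0 \<le> \<rho> p + \<epsilon> * real (count_list inc p) - \<epsilon> * real (count_list dec p)" for p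
  proof -
    have "0 \<le> \<epsilon> * real (count_list inc p)" using assms(1) by simp
    then show ?thesis using assms(2)[of p] by linarith
  qed
  show "((\<lambda>b. \<rho> (a, b) + \<epsilon> * real (count_list inc (a, b)) - \<epsilon> * real (count_list dec (a, b)))
      has_sum q x a) UNIV" if "a \<noteq> x" for a
  proof -
    have "((\<lambda>b. \<rho> (a, b) + \<epsilon> * real (count_list inc (a, b)) - \<epsilon> * real (count_list dec (a, b)))
        has_sum (q x a + \<epsilon> * real (count_list (map fst inc) a) - \<epsilon> * real (count_list (map fst dec) a)))
        UNIV"
      by (intro has_sum_diff has_sum_add has_sum_cmult_right row_marginal that has_sum_count_list_fst)
    then show ?thesis using assms(3)[OF that] by simp
  qed
  show "((\<lambda>a. \<rho> (a, b) + \<epsilon> * real (count_list inc (a, b)) - \<epsilon> * real (count_list dec (a, b)))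
      has_sum q y b) UNIV" if "b \<noteq> y" for b
  proof -
    have "((\<lambda>a. \<rho> (a, b) + \<epsilon> * real (count_list inc (a, b)) - \<epsilon> * real (count_list dec (a, b)))
        has_sum (q y b + \<epsilon> * real (count_list (map snd inc) b) - \<epsilon> * real (count_list (map snd dec) b)))
        UNIV"
      by (intro has_sum_diff has_sum_add has_sum_cmult_right col_marginal that has_sum_count_list_snd)
    then show ?thesis using assms(4)[OF that] by simp
  qed
qed

lemma plan_cost_perturb:
  "plan_cost q x y (\<lambda>p. \<rho> p + \<epsilon> * real (count_list inc p) - \<epsilon> * real (count_list dec p))
     = plan_cost q x y \<rho> + \<epsilon> * ((\<Sum>p\<leftarrow>inc. rdist x y - pair_dist p) - (\<Sum>p\<leftarrow>dec. rdist x y - pair_dist p))"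
proof -
  let ?c = "\<lambda>p. rdist x y - pair_dist p"
  have "((\<lambda>p. \<rho> p * ?c p + \<epsilon> * (real (count_list inc p) * ?c p) + - \<epsilon> * (real (count_list dec p) * ?c p))
      has_sum (plan_cost q x y \<rho> + \<epsilon> * (\<Sum>p\<leftarrow>inc. ?c p) + - \<epsilon> * (\<Sum>p\<leftarrow>dec. ?c p))) UNIV"
    by (intro has_sum_add has_sum_cmult_right has_sum_plan_cost has_sum_count_list_mult)
  then show ?thesis
    unfolding plan_cost_eq_infsum by (intro infsumI) (simp_all add: algebra_simps)
qed

text \<open>The pair \<open>(x, y)\<close> may be used in cycles: its row and column carry no marginal constraint,
  so mass on it is free.\<close>
definition cycle_pairs :: "('v \<times> 'v) set" where
  "cycle_pairs = supp \<union> {(x, y)}"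

text \<open>Cyclical monotonicity: otherwise shifting mass along the rotated cycle would raise the cost.\<close>
lemma rotation_gain_nonpos:
  assumes e: "e \<in> cycle_pairs" and L: "set L \<subseteq> cycle_pairs"
  shows "pair_dist e + rotation_gain (snd e) L (fst e) \<le> 0"
proof (rule ccontr)
  define C where "C = e # L"
  define inc where "inc = shift_pairs (snd e) L (fst e)"
  define dec where "dec = filter (\<lambda>p. p \<noteq> (x, y)) C"
  define \<epsilon> where "\<epsilon> = (if dec = [] then 1 else Min (\<rho> ` set dec) / real (length C))"
  assume "\<not> ?thesis"
  then have gain: "pair_dist e + rotation_gain (snd e) L (fst e) > 0" by simp
  have dec_supp: "set dec \<subseteq> supp" using e L by (auto simp: dec_def C_def cycle_pairs_def)
  have "Min (\<rho> ` set dec) > 0" if "dec \<noteq> []"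
    using dec_supp that by (subst Min_gr_iff) auto
  then have eps_pos: "\<epsilon> > 0" by (simp add: \<epsilon>_def C_def)
  have eps_le: "\<epsilon> * real (count_list dec p) \<le> \<rho> p" for p
  proof (cases "p \<in> set dec")
    case True
    have "count_list dec p \<le> length C"
      using count_le_length[of dec p] length_filter_le[of "\<lambda>p. p \<noteq> (x, y)" C]
      unfolding dec_def by (rule le_trans)
    then have "real (count_list dec p) \<le> real (length C)" by simp
    then have "\<epsilon> * real (count_list dec p) \<le> \<epsilon> * real (length C)"
      using eps_pos by (simp add: mult_left_mono)
    also have "\<dots> = Min (\<rho> ` set dec)"
      using True by (auto simp: \<epsilon>_def C_def)
    also have "\<dots> \<le> \<rho> p" using True by simp
    finally show ?thesis .
  qed (simp add: rho_nonneg count_list_0_iff)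
  let ?\<sigma> = "\<lambda>p. \<rho> p + \<epsilon> * real (count_list inc p) - \<epsilon> * real (count_list dec p)"
  have "count_list (map fst (filter (\<lambda>p. p \<noteq> (x, y)) xs)) a = count_list (map fst xs) a"
    if "a \<noteq> x" for a and xs :: "('v \<times> 'v) list"
    using that by (induction xs) auto
  moreover have "count_list (map snd (filter (\<lambda>p. p \<noteq> (x, y)) xs)) b = count_list (map snd xs) b"
    if "b \<noteq> y" for b and xs :: "('v \<times> 'v) list"
    using that by (induction xs) auto
  ultimately have "transport_plan q x y ?\<sigma>"
    using eps_pos eps_le
    by (intro transport_plan_perturb)
       (simp_all add: inc_def dec_def C_def map_fst_shift_pairs map_snd_shift_pairs)
  then have "plan_cost q x y ?\<sigma> \<le> plan_cost q x y \<rho>"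
    using optimal by (simp add: optimal_plan_def)
  moreover have "(\<Sum>p\<leftarrow>dec. rdist x y - pair_dist p) = (\<Sum>p\<leftarrow>C. rdist x y - pair_dist p)"
    unfolding dec_def by (induction C) (auto simp: pair_dist_def)
  then have "(\<Sum>p\<leftarrow>inc. rdist x y - pair_dist p) - (\<Sum>p\<leftarrow>dec. rdist x y - pair_dist p)
      = pair_dist e + rotation_gain (snd e) L (fst e)"
    by (simp add: sum_list_subtractf sum_list_triv inc_def C_def length_shift_pairs rotation_gain_def
        algebra_simps)
  ultimately have "\<epsilon> * (pair_dist e + rotation_gain (snd e) L (fst e)) \<le> 0"
    using plan_cost_perturb[of \<epsilon> inc dec] by simp
  then show False using mult_pos_pos[OF eps_pos gain] by linarith
qed

text \<open>Rockafellar's construction of a Kantorovich potential from cyclical monotonicity.\<close>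
definition potential :: "'v \<Rightarrow> real" where
  "potential z = Sup {rotation_gain x L z | L. set L \<subseteq> cycle_pairs}"

lemma rotation_gain_le_rdist:
  assumes "set L \<subseteq> cycle_pairs"
  shows "rotation_gain x L z \<le> rdist x z"
proof -
  have "pair_dist (x, y) + rotation_gain y L x \<le> 0"
    using rotation_gain_nonpos[of "(x, y)" L] assms by (simp add: cycle_pairs_def)
  then show ?thesis
    using rotation_gain_start[of x L z y] rotation_gain_lipschitz[of y L z x] by (simp add: pair_dist_def)
qed

lemma bdd_above_rotation_gains: "bdd_above {rotation_gain x L z | L. set L \<subseteq> cycle_pairs}"
proof (rule bdd_aboveI)
  fix v assume "v \<in> {rotation_gain x L z | L. set L \<subseteq> cycle_pairs}"
  then obtain L where "set L \<subseteq> cycle_pairs" "v = rotation_gain x L z" by blast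
  then show "v \<le> rdist x z" using rotation_gain_le_rdist by simp
qed

lemma rotation_gain_le_potential: "set L \<subseteq> cycle_pairs \<Longrightarrow> rotation_gain x L z \<le> potential z"
  unfolding potential_def by (rule cSup_upper[OF _ bdd_above_rotation_gains]) blast

lemma potential_le_iff: "potential z \<le> c \<longleftrightarrow> (\<forall>L. set L \<subseteq> cycle_pairs \<longrightarrow> rotation_gain x L z \<le> c)"
proof -
  have "rotation_gain x [] z \<in> {rotation_gain x L z | L. set L \<subseteq> cycle_pairs}" by auto
  then have "{rotation_gain x L z | L. set L \<subseteq> cycle_pairs} \<noteq> {}" by blast
  then show ?thesis unfolding potential_def by (subst cSup_le_iff[OF _ bdd_above_rotation_gains]) blast+
qed

lemma potential_lipschitz: "potential z \<le> potential w + rdist w z"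
  unfolding potential_le_iff
proof (intro allI impI)
  fix L assume "set L \<subseteq> cycle_pairs"
  then show "rotation_gain x L z \<le> potential w + rdist w z"
    using rotation_gain_lipschitz[of x L z w] rotation_gain_le_potential[of L w] by linarith
qed

lemma potential_tight:
  assumes "(a, b) \<in> cycle_pairs"
  shows "potential b - potential a = rdist a b"
proof -
  have "rotation_gain x L a \<le> potential b - rdist a b" if "set L \<subseteq> cycle_pairs" for L
    using rotation_gain_le_potential[of "L @ [(a, b)]" b] that assms by (simp add: rotation_gain_snoc)
  then have "potential a \<le> potential b - rdist a b" by (simp add: potential_le_iff)
  then show ?thesis using potential_lipschitz[of b a] by simp
qed


text \<open>The potential is an admissible test function in the definition of \<open>\<kappa>(x, y)\<close>, and
  \<open>\<nabla>\<^sub>x\<^sub>y \<Delta> potential\<close> is the cost of the plan divided by \<open>d(x, y)\<close>.\<close>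
lemma plan_cost_nonneg_of_curvature:
  assumes "ollivier_curvature q x y \<ge> 0" "x \<noteq> y"
  shows "plan_cost q x y \<rho> \<ge> 0"
proof -
  let ?f = potential
  let ?S = "{grad q x y (laplacian q f) | f. (\<forall>a b. a \<noteq> b \<longrightarrow> \<bar>grad q a b f\<bar> \<le> 1) \<and> grad q y x f = 1}"
  have pos: "rdist x y > 0" by (rule rdist_pos[OF assms(2)])
  have xy: "(x, y) \<in> cycle_pairs" by (simp add: cycle_pairs_def)
  have "\<bar>?f a - ?f b\<bar> \<le> rdist a b" for a b
    using potential_lipschitz[of a b] potential_lipschitz[of b a] rdist_sym[of a b] by linarith
  then have "\<bar>grad q a b ?f\<bar> \<le> 1" if "a \<noteq> b" for a b
    using rdist_pos[OF that] by (simp add: grad_def rdist_def[symmetric] abs_divide divide_le_eq_1)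
  moreover have "grad q y x ?f = 1"
    using potential_tight[OF xy] pos rdist_sym[of y x] by (simp add: grad_def rdist_def[symmetric])
  ultimately have mem: "grad q x y (laplacian q ?f) \<in> ?S"
    unfolding mem_Collect_eq by (intro exI[of _ ?f]) auto
  let ?B = "(\<Sum>a\<in>{a. q x a > 0}. q x a) + (\<Sum>b\<in>{b. q y b > 0}. q y b)"
  have "bdd_below ?S"
  proof (rule bdd_belowI[of _ "- ?B / rdist x y"])
    fix s assume "s \<in> ?S"
    then obtain g where g: "\<forall>a b. a \<noteq> b \<longrightarrow> \<bar>grad q a b g\<bar> \<le> 1" and s: "s = grad q x y (laplacian q g)"
      by blast
    have "- ?B \<le> laplacian q g x - laplacian q g y"
      using laplacian_abs_le[OF g, of x] laplacian_abs_le[OF g, of y] by linarith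
    then show "- ?B / rdist x y \<le> s"
      using pos by (simp add: s grad_def rdist_def[symmetric] divide_right_mono)
  qed
  then have "0 \<le> grad q x y (laplacian q ?f)"
    using assms(1) cInf_lower[OF mem] unfolding ollivier_curvature_def by linarith
  also have "grad q x y (laplacian q ?f) = (laplacian q ?f x - laplacian q ?f y) / rdist x y"
    by (simp add: grad_def rdist_def)
  also have "laplacian q ?f x - laplacian q ?f y
      = (\<Sum>p\<in>supp. \<rho> p * (?f (fst p) - ?f x) - \<rho> p * (?f (snd p) - ?f y))"
    using laplacian_eq_sum_row_marginals[OF finite_support rho_eq_0 row_marginal, of ?f]
      laplacian_eq_sum_col_marginals[OF finite_support rho_eq_0 col_marginal, of ?f]
    by (simp add: sum_subtractf)
  also have "\<dots> = plan_cost q x y \<rho>"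
    unfolding plan_cost_eq_sum
  proof (rule sum.cong[OF refl])
    fix p assume "p \<in> supp"
    then have "?f (snd p) - ?f (fst p) = pair_dist p"
      using potential_tight[of "fst p" "snd p"] by (simp add: cycle_pairs_def pair_dist_def)
    then show "\<rho> p * (?f (fst p) - ?f x) - \<rho> p * (?f (snd p) - ?f y) = \<rho> p * (rdist x y - pair_dist p)"
      using potential_tight[OF xy] by (simp add: algebra_simps)
  qed
  finally show ?thesis using pos by (simp add: zero_le_divide_iff)
qed

lemma plan_cost_nonneg_diag: "x = y \<Longrightarrow> plan_cost q x y \<rho> \<ge> 0"
proof -
  assume "x = y"
  define \<sigma> where "\<sigma> p = (if fst p = snd p then q x (fst p) else 0)" for p
  have "((\<lambda>b. \<sigma> (a, b)) has_sum q x a) UNIV" for a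
    by (subst has_sum_finite_support_iff[of "{a}"]) (auto simp: \<sigma>_def)
  moreover have "((\<lambda>b. \<sigma> (b, a)) has_sum q x a) UNIV" for a
    by (subst has_sum_finite_support_iff[of "{a}"]) (auto simp: \<sigma>_def)
  moreover have "\<forall>p. \<sigma> p \<ge> 0" by (simp add: \<sigma>_def q_nonneg)
  ultimately have "transport_plan q x y \<sigma>"
    using \<open>x = y\<close> unfolding transport_plan_def by blast
  moreover have "plan_cost q x y \<sigma> = 0"
    unfolding plan_cost_eq_infsum using \<open>x = y\<close> by (intro infsum_0) (simp add: \<sigma>_def pair_dist_def)
  ultimately show ?thesis using optimal by (auto simp: optimal_plan_def)
qed

lemma plan_cost_nonneg:
  assumes "nonneg_ollivier q"
  shows "plan_cost q x y \<rho> \<ge> 0"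
proof (cases "x = y")
  case False
  with assms show ?thesis by (intro plan_cost_nonneg_of_curvature) (auto simp: nonneg_ollivier_def)
qed (rule plan_cost_nonneg_diag)


section \<open>Drift of the distance under the coupling\<close>

lemma plan_mu_eq_sum:
  "plan_mu q x y \<rho> k = (\<Sum>p\<in>{p \<in> supp. int (d (fst p) (snd p)) - int (d x y) = k}. \<rho> p)"
proof -
  have "plan_mu q x y \<rho> k = infsum \<rho> {p. int (d (fst p) (snd p)) - int (d x y) = k}"
    unfolding plan_mu_def by (simp add: case_prod_unfold)
  also have "\<dots> = infsum \<rho> {p \<in> supp. int (d (fst p) (snd p)) - int (d x y) = k}"
    by (rule infsum_cong_neutral) (auto intro: rho_eq_0)
  also have "\<dots> = (\<Sum>p\<in>{p \<in> supp. int (d (fst p) (snd p)) - int (d x y) = k}. \<rho> p)"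
    using finite_support by (intro infsum_finite) simp
  finally show ?thesis .
qed

lemma plan_mu_nonneg: "plan_mu q x y \<rho> k \<ge> 0"
  unfolding plan_mu_eq_sum by (intro sum_nonneg rho_nonneg)

lemma plan_mu_minus_one_eq_0: "d x y = 0 \<Longrightarrow> plan_mu q x y \<rho> (-1) = 0"
  unfolding plan_mu_eq_sum by simp

context
  assumes unit_steps: "\<And>k. \<bar>k\<bar> > 1 \<Longrightarrow> plan_mu q x y \<rho> k = 0"
begin

lemma gdist_step_le_1:
  assumes "p \<in> supp"
  shows "\<bar>int (d (fst p) (snd p)) - int (d x y)\<bar> \<le> 1"
proof (rule ccontr)
  let ?k = "int (d (fst p) (snd p)) - int (d x y)"
  assume "\<not> ?thesis"
  then have "plan_mu q x y \<rho> ?k = 0" by (intro unit_steps) simp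
  moreover have "\<rho> p \<le> plan_mu q x y \<rho> ?k"
    unfolding plan_mu_eq_sum using assms finite_support rho_nonneg by (intro member_le_sum) auto
  ultimately show False using assms by simp
qed

lemma sum_over_unit_steps:
  fixes g :: "nat \<Rightarrow> real"
  shows "(\<Sum>p\<in>supp. \<rho> p * (g (d (fst p) (snd p)) - g (d x y)))
    = plan_mu q x y \<rho> (-1) * (g (d x y - 1) - g (d x y)) + plan_mu q x y \<rho> 1 * (g (Suc (d x y)) - g (d x y))"
proof -
  let ?n = "d x y" and ?l = "\<lambda>p. int (d (fst p) (snd p)) - int (d x y)"
  have "(\<Sum>p\<in>supp. \<rho> p * (g (d (fst p) (snd p)) - g ?n))
      = (\<Sum>p\<in>supp. (if ?l p = -1 then \<rho> p else 0) * (g (?n - 1) - g ?n)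
          + (if ?l p = 1 then \<rho> p else 0) * (g (Suc ?n) - g ?n))"
  proof (rule sum.cong[OF refl])
    fix p assume "p \<in> supp"
    then have "d (fst p) (snd p) = ?n \<or> (d (fst p) (snd p) = ?n - 1 \<and> ?n > 0) \<or> d (fst p) (snd p) = Suc ?n"
      using gdist_step_le_1 by fastforce
    then show "\<rho> p * (g (d (fst p) (snd p)) - g ?n) = (if ?l p = -1 then \<rho> p else 0) * (g (?n - 1) - g ?n)
        + (if ?l p = 1 then \<rho> p else 0) * (g (Suc ?n) - g ?n)"
      by (elim disjE conjE) (simp_all add: of_nat_diff)
  qed
  also have "\<dots> = plan_mu q x y \<rho> (-1) * (g (?n - 1) - g ?n) + plan_mu q x y \<rho> 1 * (g (Suc ?n) - g ?n)"
    unfolding plan_mu_eq_sum sum.inter_filter[OF finite_support]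
    by (simp add: sum.distrib sum_distrib_right)
  finally show ?thesis .
qed

lemma plan_cost_eq_plan_mu: "plan_cost q x y \<rho> = plan_mu q x y \<rho> (-1) - plan_mu q x y \<rho> 1"
proof -
  have "plan_cost q x y \<rho> = - (\<Sum>p\<in>supp. \<rho> p * (real (d (fst p) (snd p)) - real (d x y)))"
    unfolding plan_cost_eq_sum by (simp add: rdist_def pair_dist_def sum_negf[symmetric] algebra_simps)
  also have "\<dots> = plan_mu q x y \<rho> (-1) - plan_mu q x y \<rho> 1"
    unfolding sum_over_unit_steps
    by (cases "d x y = 0") (simp_all add: plan_mu_minus_one_eq_0 of_nat_diff)
  finally show ?thesis .
qed

end

end

text \<open>With \<open>a = \<phi>(n+1) - \<phi>(n) \<le> b = \<phi>(n) - \<phi>(n-1)\<close>, the difference of the two sides is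
  \<open>(\<mu>\<^sub>d\<^sub>o\<^sub>w\<^sub>n - r) (a - b) + (\<mu>\<^sub>u\<^sub>p - \<mu>\<^sub>d\<^sub>o\<^sub>w\<^sub>n) a \<le> 0\<close>.\<close>
lemma coupled_drift_le_absorbing_lap:
  fixes \<phi> :: "nat \<Rightarrow> real"
  assumes mono: "\<And>m. \<phi> m \<le> \<phi> (Suc m)" and concave: "\<And>m. \<phi> m + \<phi> (Suc (Suc m)) \<le> 2 * \<phi> (Suc m)"
    and "0 \<le> \<mu>\<^sub>u\<^sub>p" "\<mu>\<^sub>u\<^sub>p \<le> \<mu>\<^sub>d\<^sub>o\<^sub>w\<^sub>n" "n > 0 \<Longrightarrow> r \<le> \<mu>\<^sub>d\<^sub>o\<^sub>w\<^sub>n" "n = 0 \<Longrightarrow> \<mu>\<^sub>d\<^sub>o\<^sub>w\<^sub>n = 0"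
  shows "\<mu>\<^sub>d\<^sub>o\<^sub>w\<^sub>n * (\<phi> (n - 1) - \<phi> n) + \<mu>\<^sub>u\<^sub>p * (\<phi> (Suc n) - \<phi> n) \<le> absorbing_lap r \<phi> n"
proof (cases "n = 0")
  case True
  then show ?thesis using assms(3-6) by (simp add: absorbing_lap_eq)
next
  case False
  define a where "a = \<phi> (Suc n) - \<phi> n"
  define b where "b = \<phi> n - \<phi> (n - 1)"
  have "0 \<le> a" using mono[of n] by (simp add: a_def)
  moreover have "a \<le> b" using concave[of "n - 1"] False by (simp add: a_def b_def)
  ultimately have "(\<mu>\<^sub>d\<^sub>o\<^sub>w\<^sub>n - r) * a \<le> (\<mu>\<^sub>d\<^sub>o\<^sub>w\<^sub>n - r) * b" "(\<mu>\<^sub>u\<^sub>p - \<mu>\<^sub>d\<^sub>o\<^sub>w\<^sub>n) * a \<le> 0"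
    using False assms(4,5) by (auto intro: mult_left_mono mult_nonpos_nonneg)
  then show ?thesis using False by (simp add: absorbing_lap_eq a_def b_def algebra_simps)
qed

theorem mainTheorem7:
  fixes q :: "'v \<Rightarrow> 'v \<Rightarrow> real"
    and qt :: "'v \<times> 'v \<Rightarrow> 'v \<times> 'v \<Rightarrow> real"
  assumes "is_graph q" and "reversible q" and "connected_graph q"
    and "nonneg_ollivier q"
    and "perfect_coupling q qt"
    and "t > 0"
  shows "\<exists>D. ((\<lambda>s. phi (qmin q) s (gdist q x y)) has_real_derivative D) (at t) \<and>
             D \<ge> laplacian qt (\<lambda>(a, b). phi (qmin q) t (gdist q a b)) (x, y)"
proof -
  have coupling: "coupling_graph q qt" and opt: "optimal_plan q x y (qt (x, y))"
    and unit: "\<And>k. \<bar>k\<bar> > 1 \<Longrightarrow> plan_mu q x y (qt (x, y)) k = 0"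
    and contract: "x \<noteq> y \<Longrightarrow> plan_mu q x y (qt (x, y)) (-1) \<ge> 2 * qmin q"
    using assms(5) unfolding perfect_coupling_def by blast+
  have "finite {p. qt (x, y) p > 0}" using coupling by (simp add: coupling_graph_def is_graph_def)
  then interpret finite_optimal_plan q x y "qt (x, y)"
    using assms(1-3) opt by unfold_locales
  let ?r = "2 * max (qmin q) 0" and ?\<phi> = "phi (qmin q) t" and ?\<mu> = "plan_mu q x y (qt (x, y))"
  have "laplacian qt (\<lambda>(a, b). ?\<phi> (d a b)) (x, y) = (\<Sum>p\<in>supp. qt (x, y) p * (?\<phi> (d (fst p) (snd p)) - ?\<phi> (d x y)))"
    by (simp add: laplacian_def case_prod_unfold)
  also have "\<dots> = ?\<mu> (-1) * (?\<phi> (d x y - 1) - ?\<phi> (d x y)) + ?\<mu> 1 * (?\<phi> (Suc (d x y)) - ?\<phi> (d x y))"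
    by (rule sum_over_unit_steps[OF unit])
  also have "\<dots> \<le> absorbing_lap ?r ?\<phi> (d x y)"
  proof (rule coupled_drift_le_absorbing_lap)
    show "?\<phi> m \<le> ?\<phi> (Suc m)" "?\<phi> m + ?\<phi> (Suc (Suc m)) \<le> 2 * ?\<phi> (Suc m)" for m
      using assms(6) by (simp_all add: phi_mono phi_concave)
    show "0 \<le> ?\<mu> 1" "?\<mu> 1 \<le> ?\<mu> (-1)"
      using plan_mu_nonneg plan_cost_nonneg[OF assms(4)] plan_cost_eq_plan_mu[OF unit] by simp_all
    show "?r \<le> ?\<mu> (-1)" if "d x y > 0"
      using that gdist_eq_0_iff[of x y] contract plan_mu_nonneg[of "-1"] by (auto simp: max_def)
    show "d x y = 0 \<Longrightarrow> ?\<mu> (-1) = 0" by (rule plan_mu_minus_one_eq_0)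
  qed
  finally show ?thesis using phi_has_real_derivative by blast
qed

end
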